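(* Let $f(x)$ be an irreducible nonconstant polynomial in $\mathbb{Z}[x]$. Let $b(x) \in \mathbb{Z}[x]$ be an irreducible polynomial, not associate to $f(x)$ in $\mathbb{Z}[x]$, such that there exists an integer $r_b \geq 2$ with $b(x) \mid f(x^{r_b})$ in $\mathbb{Z}[x]$. Then for every $k \in \mathbb{N}$ and every finite sequence $\sigma = (\sigma_1, \ldots, \sigma_k)$ of natural numbers greater than one with $\prod_{i=1}^k \sigma_i = r_b$, there exists a splitting sequence $F = (f_n(x))_{n \in \mathbb{N}_0}$ of $f(x)$ whose exponent sequence begins with $\sigma_1, \ldots, \sigma_k$ and such that $f_k(x) = b(x)$.
   Context: Let $f(x)$ be an irreducible polynomial in $\mathbb{Z}[x]$ and let $(e_n)_{n \in \mathbb{N}}$ be a sequence of positive integers (the exponent sequence; only finitely many of its terms may be specified, in which case only the corresponding finitely many terms of the sequence below matter). A splitting sequence of $f(x)$ with this exponent sequence is a sequence $F = (f_n(x))_{n \in \mathbb{N}_0}$ of irreducible polynomials in $\mathbb{Z}[x]$ with $f_0(x) = f(x)$ and, for each $k \geq 1$, $f_k(x)$ an (arbitrarily chosen) irreducible divisor in $\mathbb{Z}[x]$ of $f_{k-1}(x^{e_k})$. *)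

theory Defs
  imports "HOL-Computational_Algebra.Computational_Algebra"
begin

definition splitting_seq_upto ::
  "int poly \<Rightarrow> (nat \<Rightarrow> nat) \<Rightarrow> nat \<Rightarrow> (nat \<Rightarrow> int poly) \<Rightarrow> bool" where
  "splitting_seq_upto f e k F \<longleftrightarrow>
     F 0 = f \<and>
     (\<forall>j\<in>{1..k}. irreducible (F j) \<and> F j dvd pcompose (F (j - 1)) (monom 1 (e j)))"

end

theory Submission
  imports Defs
begin

text \<open>Write \<open>R\<^sub>j = \<sigma>\<^sub>1 \<cdots> \<sigma>\<^sub>j\<close>. Since \<open>f(x^R\<^sub>k) = (f(x^R\<^sub>k\<^sub>-\<^sub>1))(x^\<sigma>\<^sub>k)\<close> and substituting \<open>x^\<sigma>\<^sub>k\<close>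
  is multiplicative, the irreducible, hence prime, polynomial \<open>b\<close> divides \<open>p(x^\<sigma>\<^sub>k)\<close> for
  some irreducible factor \<open>p\<close> of \<open>f(x^R\<^sub>k\<^sub>-\<^sub>1)\<close>. Induction on \<open>k\<close> then builds the splitting
  sequence backwards from \<open>b\<close>.\<close>

lemma pcompose_power_left: "pcompose (p ^ n) q = pcompose p q ^ n"
  by (induction n) (simp_all add: pcompose_1 pcompose_mult)

lemma pcompose_monom_1: "pcompose (monom (1 :: 'a :: comm_semiring_1) n) q = q ^ n"
  by (simp add: monom_altdef pcompose_power_left pcompose_pCons)

lemma pcompose_pcompose_monom_1:
  fixes f :: "'a :: comm_semiring_1 poly"
  shows "pcompose (pcompose f (monom 1 m)) (monom 1 n) = pcompose f (monom 1 (m * n))"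
  by (simp add: pcompose_monom_1 monom_power mult.commute flip: pcompose_assoc)

lemma pcompose_monom_1_nonzero:
  fixes f :: "'a :: idom poly"
  assumes "f \<noteq> 0" "n > 0"
  shows "pcompose f (monom 1 n) \<noteq> 0"
  using assms by (simp add: pcompose_eq_0_iff degree_monom_eq)

lemma prime_elem_dvd_pcompose_imp_prime_factor:
  fixes g q :: "'a :: {factorial_ring_gcd, semiring_gcd_mult_normalize} poly"
  assumes "prime_elem b" "g \<noteq> 0" "b dvd pcompose g q"
  obtains p where "prime p" "p dvd g" "b dvd pcompose p q"
proof -
  have "g \<noteq> 0 \<longrightarrow> b dvd pcompose g q \<longrightarrow> (\<exists>p. prime p \<and> p dvd g \<and> b dvd pcompose p q)"
  proof (induction g rule: prime_divisors_induct)
    case zero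
    then show ?case by simp
  next
    case (unit u)
    then obtain v where "1 = u * v"
      by (elim dvdE)
    then have "1 = pcompose u q * pcompose v q"
      by (simp add: pcompose_1 flip: pcompose_mult)
    then have "is_unit (pcompose u q)"
      by (rule dvdI)
    then have "\<not> b dvd pcompose u q"
      using assms(1) dvd_unit_imp_unit prime_elem_not_unit by blast
    then show ?case
      by blast
  next
    case (factor p g)
    show ?case
    proof (intro impI)
      assume "p * g \<noteq> 0" "b dvd pcompose (p * g) q"
      then have "b dvd pcompose p q \<or> b dvd pcompose g q"
        using assms(1) by (simp add: pcompose_mult prime_elem_dvd_mult_iff)
      then show "\<exists>p'. prime p' \<and> p' dvd p * g \<and> b dvd pcompose p' q"
      proof
        assume "b dvd pcompose p q"
        with \<open>prime p\<close> show ?thesis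
          by (intro exI[of _ p]) simp
      next
        assume "b dvd pcompose g q"
        moreover have "g \<noteq> 0"
          using \<open>p * g \<noteq> 0\<close> by simp
        ultimately obtain p' where "prime p'" "p' dvd g" "b dvd pcompose p' q"
          using factor.IH by blast
        then show ?thesis
          by (intro exI[of _ p']) simp
      qed
    qed
  qed
  then show thesis
    using assms that by blast
qed

lemma splitting_seq_upto_ending_in:
  fixes f b :: "int poly"
  assumes "f \<noteq> 0" "k \<ge> 1" "irreducible b" "\<forall>i\<in>{1..k}. \<sigma> i > 0"
    and "b dvd pcompose f (monom 1 (\<Prod>i=1..k. \<sigma> i))"
  shows "\<exists>F. splitting_seq_upto f \<sigma> k F \<and> F k = b"
  using assms(2-)
proof (induction k arbitrary: b rule: nat_induct_at_least)
  case base
  then show ?case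
    by (intro exI[of _ "\<lambda>j. if j = 0 then f else b"]) (auto simp: splitting_seq_upto_def)
next
  case (Suc k)
  let ?g = "pcompose f (monom 1 (\<Prod>i=1..k. \<sigma> i))"
  have "prime_elem b"
    using Suc.prems(1) by (simp add: prime_elem_iff_irreducible)
  moreover have "?g \<noteq> 0"
    using assms(1) Suc.prems(2) by (simp add: pcompose_monom_1_nonzero prod_pos)
  moreover have "b dvd pcompose ?g (monom 1 (\<sigma> (Suc k)))"
    using Suc.prems(3) by (simp add: prod.nat_ivl_Suc' pcompose_pcompose_monom_1)
  ultimately obtain p where p: "prime p" "p dvd ?g" "b dvd pcompose p (monom 1 (\<sigma> (Suc k)))"
    by (rule prime_elem_dvd_pcompose_imp_prime_factor)
  moreover have "\<forall>i\<in>{1..k}. \<sigma> i > 0"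
    using Suc.prems(2) by simp
  ultimately obtain F where "splitting_seq_upto f \<sigma> k F" "F k = p"
    using Suc.IH by (meson prime_imp_prime_elem prime_elem_imp_irreducible)
  then have "splitting_seq_upto f \<sigma> (Suc k) (F(Suc k := b))"
    using Suc.prems(1) p(3) Suc.hyps by (auto simp: splitting_seq_upto_def le_Suc_eq)
  then show ?case
    by auto
qed

theorem lemma3p5:
  fixes f b :: "int poly" and r :: nat
  assumes "irreducible f" and "degree f > 0"
    and "irreducible b" and "\<not> (b dvd f \<and> f dvd b)"
    and "r \<ge> 2" and "b dvd pcompose f (monom 1 r)"
  shows "\<forall>(k::nat) (\<sigma>::nat \<Rightarrow> nat).
           (\<forall>i\<in>{1..k}. \<sigma> i > 1) \<and> (\<Prod>i=1..k. \<sigma> i) = r \<longrightarrow>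
           (\<exists>F. splitting_seq_upto f \<sigma> k F \<and> F k = b)"
proof (intro allI impI)
  fix k and \<sigma> :: "nat \<Rightarrow> nat"
  assume \<sigma>: "(\<forall>i\<in>{1..k}. \<sigma> i > 1) \<and> (\<Prod>i=1..k. \<sigma> i) = r"
  have "k \<ge> 1"
    using \<sigma> \<open>r \<ge> 2\<close> by (cases k) auto
  moreover have "f \<noteq> 0"
    using \<open>degree f > 0\<close> by auto
  moreover have "\<forall>i\<in>{1..k}. \<sigma> i > 0"
    using \<sigma> by auto
  ultimately show "\<exists>F. splitting_seq_upto f \<sigma> k F \<and> F k = b"
    using splitting_seq_upto_ending_in \<sigma> assms(3,6) by blast
qed

end
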